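(* Let $k$ be a positive integer and $G_1,\dots,G_m$ finite subgraphs of $\mathsf{Path}_{\mathbb Z}$ with $G_1\cup\dots\cup G_m=\mathsf{Path}_k$ and $\vec\Delta(G_1,\dots,G_m)=1$. Then there exists a shift permutation $\sigma$ of $[m]$ such that \[\vec\lambda(G_{\sigma(1)},\dots,G_{\sigma(m)})\ge\frac{k}{8}-\frac{\max\{\lambda(G_1),\dots,\lambda(G_m)\}}{2}\] and \[\vec\Delta(G_{\tilde\sigma_j(1)},\dots,G_{\tilde\sigma_j(m)})\ge\frac{\vec\Delta(G_1,\dots,G_m)}{2}\quad\text{for all }j\in[m].\]
   Context: Graphs are finite simple graphs without isolated vertices; $\emptyset$ is the empty graph. $\mathsf{Path}_{\mathbb Z}$ has vertex set $\mathbb Z$ and edges $\{i-1,i\}$; $\mathsf{Path}_k$ has vertices $0,\dots,k$ and edges $\{i-1,i\}$, $1\le i\le k$. $\Delta(G)$ = number of connected components; $\lambda(G)$ = maximum number of edges in a component ($0$ for $\emptyset$); $G\ominus F$ = union of components of $G$ sharing no vertex with $F$. With $H_l=G_l\ominus(G_1\cup\dots\cup G_{l-1})$: $\vec\Delta(G_1,\dots,G_m)=\sum_l\Delta(H_l)$, $\vec\lambda(G_1,\dots,G_m)=\sum_l\lambda(H_l)$ (applied to reordered sequences accordingly). Shift permutation: a permutation $\sigma$ of $[m]$ with $\sigma(j)\ge j-1$ for all $j$. For $I\subseteq[m]$ with $m\in I$, $I=\{i_1<\dots<i_p\}$, $i_0:=0$, let $\sigma_I(j)=i_h$ if $j=i_{h-1}+1$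 for some $h$, and $\sigma_I(j)=j-1$ otherwise; every shift permutation is $\sigma_I$ for exactly one such $I$. For $\sigma=\sigma_I$ and $j\in[m]$, $\tilde\sigma_j:=\sigma_{\tilde I_j}$ with $\tilde I_j=I\cup[i_{h-1}]$ if $j=i_h\in I$ and $\tilde I_j=I\cup[j-1]$ if $j\notin I$. *)

theory Defs
  imports Complex_Main "HOL-Combinatorics.Permutations"
begin

text \<open>A subgraph of Path_Z without isolated vertices is determined by its edge set.
  We encode it as a set E of integers: i \<in> E means the edge {i-1,i} is present.
  Path_k is {1..k}.\<close>

definition pverts :: "int set \<Rightarrow> int set" where
  "pverts E = {v. v \<in> E \<or> v + 1 \<in> E}"

definition pcomp :: "int set \<Rightarrow> int \<Rightarrow> int set" where
  "pcomp E i = {j. \<forall>t. min i j \<le> t \<and> t \<le> max i j \<longrightarrow> t \<in> E}"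

definition pcomponents :: "int set \<Rightarrow> int set set" where
  "pcomponents E = pcomp E ` E"

definition pDelta :: "int set \<Rightarrow> nat" where
  "pDelta E = card (pcomponents E)"

definition pLambda :: "int set \<Rightarrow> nat" where
  "pLambda E = Max (insert 0 (card ` pcomponents E))"

definition pminus :: "int set \<Rightarrow> int set \<Rightarrow> int set" where
  "pminus G F = \<Union> {C \<in> pcomponents G. pverts C \<inter> pverts F = {}}"

text \<open>Sequences G_1..G_m are functions nat \<Rightarrow> int set on indices 1..m.\<close>
definition Hseq :: "(nat \<Rightarrow> int set) \<Rightarrow> nat \<Rightarrow> int set" where
  "Hseq G l = pminus (G l) (\<Union> j\<in>{1..<l}. G j)"

definition vecDelta :: "nat \<Rightarrow> (nat \<Rightarrow> int set) \<Rightarrow> nat" where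
  "vecDelta m G = (\<Sum> l = 1..m. pDelta (Hseq G l))"

definition vecLambda :: "nat \<Rightarrow> (nat \<Rightarrow> int set) \<Rightarrow> nat" where
  "vecLambda m G = (\<Sum> l = 1..m. pLambda (Hseq G l))"

definition shift_perm :: "nat \<Rightarrow> (nat \<Rightarrow> nat) \<Rightarrow> bool" where
  "shift_perm m \<sigma> \<longleftrightarrow> \<sigma> permutes {1..m} \<and> (\<forall>j\<in>{1..m}. \<sigma> j \<ge> j - 1)"

text \<open>\<sigma>_I for I \<subseteq> [m] with m \<in> I, I = {i_1<...<i_p}, i_0 = 0:
  \<sigma>_I(j) = i_h if j = i_{h-1}+1 (i.e. j-1 \<in> {0} \<union> I, and i_h is the least element of I that is \<ge> j),
  otherwise j-1; identity outside [m].\<close>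
definition sigmaI :: "nat \<Rightarrow> nat set \<Rightarrow> nat \<Rightarrow> nat" where
  "sigmaI m I j = (if j \<in> {1..m} then
      (if j - 1 \<in> insert 0 I then (LEAST i. i \<in> I \<and> j \<le> i) else j - 1)
    else j)"

text \<open>\<tilde>I_j: if j = i_h \<in> I then I \<union> [i_{h-1}] (i_{h-1} the largest element of {0} \<union> I below j),
  otherwise I \<union> [j-1].\<close>
definition tildeI :: "nat set \<Rightarrow> nat \<Rightarrow> nat set" where
  "tildeI I j = (if j \<in> I then I \<union> {1..(GREATEST i. i \<in> insert 0 I \<and> i < j)}
                 else I \<union> {1..j - 1})"

end

theory Submission
  imports Defs
begin

text \<open>Since vecDelta(G_1, ..., G_m) = 1, the first nonempty graph G_l0 is connected and every
  component of a later G_(a+1) meets U_a = G_1 \<union> ... \<union> G_a, so the prefix unions U_a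
  (a \<ge> l0) are intervals growing from G_l0 to Path_k.

  For a chain 0 = a_0 < a_1 < ... < a_r = m, the shift permutation \<sigma>_I with
  I = {a_1, ..., a_r} puts G_(a_h) at position a_(h-1) + 1, behind a rearrangement of
  G_1, ..., G_(a_(h-1)); hence vecLambda(G \<circ> \<sigma>_I) is at least the sum of
  \<lambda>(G_(a_h) \<ominus> U_(a_(h-1))).

  Follow the right end of U_a greedily: from q jump to the last index r whose graph covers all
  edges from max U_q + 1 up to max U_r.  Every other greedy index forms a chain whose components
  avoid the prefix union two greedy steps back, and one of the two interleaved chains collects
  half of the growth k - max G_l0 of the right end.  The mirror image treats the left end, and
  max G_l0 - min G_l0 + 1 \<le> \<lambda>(G_l0); so some chain has value at least
  (k - max \<lambda>(G_j)) / 4.  The bound for the \<sigma>~_j only needs vecDelta \<ge> 1, which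
  holds for every rearrangement of a family that is not entirely empty.\<close>

section \<open>Shift permutations\<close>

lemma sigmaI_in_range:
  assumes "I \<subseteq> {1..n}" "n \<in> I" "j \<in> {1..n}"
  shows "sigmaI n I j \<in> {1..n}"
proof -
  have "(LEAST i. i \<in> I \<and> j \<le> i) \<in> I"
    using LeastI[of "\<lambda>i. i \<in> I \<and> j \<le> i" n] assms by auto
  then show ?thesis using assms by (auto simp: sigmaI_def)
qed

lemma sigmaI_ge_pred:
  assumes "I \<subseteq> {1..n}" "n \<in> I" "j \<in> {1..n}"
  shows "j - 1 \<le> sigmaI n I j"
proof -
  have "j \<le> (LEAST i. i \<in> I \<and> j \<le> i)"
    using LeastI[of "\<lambda>i. i \<in> I \<and> j \<le> i" n] assms by auto
  then show ?thesis using assms by (auto simp: sigmaI_def)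
qed

text \<open>An element i of I is hit by the successor of its predecessor in insert 0 I; an element
  outside I is hit by its own successor.\<close>
lemma sigmaI_surj:
  assumes "I \<subseteq> {1..n}" "n \<in> I" "i \<in> {1..n}"
  shows "i \<in> sigmaI n I ` {1..n}"
proof (cases "i \<in> I")
  case True
  define g where "g = Max {x \<in> insert 0 I. x < i}"
  have fin: "finite {x \<in> insert 0 I. x < i}" by auto
  have "0 \<in> {x \<in> insert 0 I. x < i}" using assms(3) by auto
  then have g: "g \<in> insert 0 I" "g < i" using Max_in[OF fin] unfolding g_def by blast+
  have below_g: "x \<le> g" if "x \<in> I" "x < i" for x
    unfolding g_def using fin that by (auto intro: Max_ge)
  have "(LEAST x. x \<in> I \<and> Suc g \<le> x) = i"
  proof (rule Least_equality)
    show "i \<in> I \<and> Suc g \<le> i" using True g by auto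
    show "i \<le> y" if "y \<in> I \<and> Suc g \<le> y" for y
      using below_g[of y] that by (cases "y < i") auto
  qed
  then have "sigmaI n I (Suc g) = i" using g assms True by (auto simp: sigmaI_def)
  moreover have "Suc g \<in> {1..n}" using g assms by auto
  ultimately show ?thesis by force
next
  case False
  then have "i < n" using assms by (cases "i = n") auto
  then have "sigmaI n I (Suc i) = i" using False assms by (auto simp: sigmaI_def)
  moreover have "Suc i \<in> {1..n}" using \<open>i < n\<close> by auto
  ultimately show ?thesis by force
qed

lemma sigmaI_permutes:
  assumes "I \<subseteq> {1..n}" "0 < n \<longrightarrow> n \<in> I"
  shows "sigmaI n I permutes {1..n}"
proof (cases "n = 0")
  case True
  then show ?thesis by (simp add: sigmaI_def permutes_def)
next
  case False
  then have n: "n \<in> I" using assms by simp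
  show ?thesis
  proof (rule inj_imp_permutes)
    show "inj_on (sigmaI n I) {1..n}"
      by (rule finite_surj_inj) (use sigmaI_surj[OF assms(1) n] in auto)
    show "sigmaI n I x \<in> {1..n}" if "x \<in> {1..n}" for x
      using sigmaI_in_range[OF assms(1) n that] .
    show "sigmaI n I i = i" if "i \<notin> {1..n}" for i
      using that unfolding sigmaI_def by presburger
  qed simp
qed

lemma shift_perm_sigmaI:
  assumes "I \<subseteq> {1..n}" "n \<in> I"
  shows "shift_perm n (sigmaI n I)"
  unfolding shift_perm_def using sigmaI_permutes sigmaI_ge_pred assms by blast

lemma tildeI_subset:
  assumes "I \<subseteq> {1..n}" "n \<in> I" "j \<in> {1..n}"
  shows "tildeI I j \<subseteq> {1..n}" and "n \<in> tildeI I j"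
proof -
  have "(GREATEST i. i \<in> insert 0 I \<and> i < j) < j" if "j \<in> I"
    using GreatestI_nat[of "\<lambda>i. i \<in> insert 0 I \<and> i < j" 0 j] assms that by auto
  then show "tildeI I j \<subseteq> {1..n}" "n \<in> tildeI I j"
    using assms by (auto simp: tildeI_def)
qed

lemma sigmaI_insert_below:
  assumes "I \<subseteq> {1..a}" "a \<in> I" "a < b" "j \<in> {1..a}"
  shows "sigmaI b (insert b I) j = sigmaI a I j"
proof -
  have "(LEAST i. i \<in> I \<and> j \<le> i) \<in> I \<and> j \<le> (LEAST i. i \<in> I \<and> j \<le> i)"
    by (rule LeastI[of _ a]) (use assms in auto)
  moreover have "(LEAST i. i \<in> I \<and> j \<le> i) \<le> a"
    by (rule Least_le) (use assms in auto)
  ultimately have "(LEAST i. i \<in> insert b I \<and> j \<le> i) = (LEAST i. i \<in> I \<and> j \<le> i)"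
    using assms(3) by (intro Least_equality) (auto intro: Least_le)
  moreover have "j - 1 \<in> insert 0 (insert b I) \<longleftrightarrow> j - 1 \<in> insert 0 I" using assms by auto
  ultimately show ?thesis using assms unfolding sigmaI_def by simp
qed

lemma sigmaI_insert_Suc:
  assumes "I \<subseteq> {1..a}" "0 < a \<longrightarrow> a \<in> I" "a < b"
  shows "sigmaI b (insert b I) (Suc a) = b"
proof -
  have "(LEAST i. i \<in> insert b I \<and> Suc a \<le> i) = b"
    by (rule Least_equality) (use assms in auto)
  moreover have "a \<in> insert 0 (insert b I)" using assms by (cases "a = 0") auto
  ultimately show ?thesis unfolding sigmaI_def using assms by auto
qed

section \<open>Components of subgraphs of the integer path\<close>

lemma pcomp_subset: "pcomp E i \<subseteq> E"
proof
  fix j assume "j \<in> pcomp E i"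
  then have "\<forall>t. min i j \<le> t \<and> t \<le> max i j \<longrightarrow> t \<in> E" unfolding pcomp_def by simp
  then show "j \<in> E" by (metis min.cobounded2 max.cobounded2)
qed

lemma pcomp_self: "i \<in> E \<Longrightarrow> i \<in> pcomp E i"
  unfolding pcomp_def by auto

lemma interval_subset_pcomp: "{c..d} \<subseteq> E \<Longrightarrow> {c..d} \<subseteq> pcomp E d"
  unfolding pcomp_def by (auto simp: subset_iff)

lemma pcomp_atLeastAtMost: "x \<in> pcomp E d \<Longrightarrow> x \<le> d \<Longrightarrow> {x..d} \<subseteq> E"
  unfolding pcomp_def by auto

lemma pcomp_gap:
  assumes "t \<notin> E" "x \<in> pcomp E y"
  shows "t < y \<Longrightarrow> t < x" and "y < t \<Longrightarrow> x < t"
proof -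
  have "\<forall>s. min y x \<le> s \<and> s \<le> max y x \<longrightarrow> s \<in> E"
    using assms(2) unfolding pcomp_def by simp
  then have "\<not> (min y x \<le> t \<and> t \<le> max y x)" using assms(1) by blast
  then show "t < y \<Longrightarrow> t < x" and "y < t \<Longrightarrow> x < t" by linarith+
qed

lemma pverts_disjointI:
  assumes "\<And>x e. x \<in> C \<Longrightarrow> e \<in> F \<Longrightarrow> e + 1 < x"
  shows "pverts C \<inter> pverts F = {}"
  using assms unfolding pverts_def by fastforce

lemma finite_pcomponents: "finite E \<Longrightarrow> finite (pcomponents E)"
  unfolding pcomponents_def by simp

lemma pminus_subset: "pminus E F \<subseteq> E"
  unfolding pminus_def pcomponents_def using pcomp_subset by blast

lemma pcomp_subset_pminus:
  assumes "i \<in> E" "pverts (pcomp E i) \<inter> pverts F = {}"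
  shows "pcomp E i \<subseteq> pminus E F"
  using assms unfolding pminus_def pcomponents_def by blast

lemma pminus_empty [simp]: "pminus E {} = E"
proof
  have "pverts {} = {}" by (simp add: pverts_def)
  then show "E \<subseteq> pminus E {}" using pcomp_subset_pminus pcomp_self by fastforce
qed (rule pminus_subset)

lemma pminus_eq_empty_touches:
  assumes "pminus E F = {}" "i \<in> E"
  shows "pverts (pcomp E i) \<inter> pverts F \<noteq> {}"
  using pcomp_subset_pminus[of i E F] pcomp_self[of i E] assms by blast

lemma pDelta_ge_1: "finite E \<Longrightarrow> E \<noteq> {} \<Longrightarrow> 1 \<le> pDelta E"
  unfolding pDelta_def pcomponents_def by (simp add: Suc_le_eq card_gt_0_iff)

lemma pDelta_eq_0: "finite E \<Longrightarrow> pDelta E = 0 \<Longrightarrow> E = {}"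
  unfolding pDelta_def pcomponents_def by simp

lemma pLambda_ge_interval:
  assumes "finite E" "c \<le> d" "{c..d} \<subseteq> E"
  shows "d - c + 1 \<le> int (pLambda E)"
proof -
  have "card {c..d} \<le> card (pcomp E d)"
    using assms pcomp_subset[of E d] interval_subset_pcomp[OF assms(3)]
    by (meson card_mono finite_subset)
  also have "\<dots> \<le> pLambda E"
    unfolding pLambda_def using assms by (intro Max_ge) (auto simp: finite_pcomponents pcomponents_def)
  finally have "card {c..d} \<le> pLambda E" .
  moreover have "int (card {c..d}) = d - c + 1" using assms(2) by simp
  ultimately show ?thesis by linarith
qed

lemma pLambda_pminus_ge_interval:
  assumes "finite E" "c \<le> d" "{c..d} \<subseteq> E" "pverts (pcomp E d) \<inter> pverts F = {}"
  shows "d - c + 1 \<le> int (pLambda (pminus E F))"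
proof -
  have "d \<in> E" using assms(2,3) by auto
  then have "{c..d} \<subseteq> pminus E F"
    using interval_subset_pcomp[OF assms(3)] pcomp_subset_pminus[OF _ assms(4)] by blast
  then show ?thesis
    using pLambda_ge_interval[OF finite_subset[OF pminus_subset assms(1)] assms(2)] by blast
qed

definition is_int_interval :: "int set \<Rightarrow> bool" where
  "is_int_interval S \<longleftrightarrow> (\<forall>x\<in>S. \<forall>y\<in>S. {x..y} \<subseteq> S)"

lemma is_int_interval_split:
  assumes "is_int_interval A" "t \<notin> A"
  shows "A \<subseteq> {..<t} \<or> A \<subseteq> {t<..}"
proof (rule ccontr)
  assume "\<not> ?thesis"
  then obtain a b where "a \<in> A" "t \<le> a" "b \<in> A" "b \<le> t"
    by (meson subsetI lessThan_iff greaterThan_iff not_less)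
  then have "t \<in> A" using assms(1) unfolding is_int_interval_def by (meson atLeastAtMost_iff subsetD)
  with assms(2) show False ..
qed

lemma pLambda_ge_Max_Min:
  assumes "finite S" "S \<noteq> {}" "is_int_interval S"
  shows "Max S - Min S + 1 \<le> int (pLambda S)"
proof (rule pLambda_ge_interval[OF assms(1)])
  show "Min S \<le> Max S" using assms(1,2) by simp
  show "{Min S..Max S} \<subseteq> S" using assms unfolding is_int_interval_def by simp
qed

lemma pDelta_eq_1_interval:
  assumes "pDelta E = 1"
  shows "is_int_interval E"
  unfolding is_int_interval_def
proof (intro ballI subsetI)
  fix x y t assume xy: "x \<in> E" "y \<in> E" and t: "t \<in> {x..y}"
  obtain C where "pcomp E ` E = {C}"
    using assms unfolding pDelta_def pcomponents_def by (rule card_1_singletonE)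
  then have "y \<in> pcomp E x" using xy pcomp_self[of y E] by blast
  then have "\<forall>s. min x y \<le> s \<and> s \<le> max x y \<longrightarrow> s \<in> E" unfolding pcomp_def by simp
  moreover have "min x y \<le> t \<and> t \<le> max x y" using t by simp
  ultimately show "t \<in> E" by blast
qed

text \<open>A gap t of A \<union> E splits off A on one side; the component of E on the other side then
  cannot touch A.\<close>
lemma is_int_interval_Un:
  assumes "is_int_interval A"
    and touch: "\<And>i. i \<in> E \<Longrightarrow> pverts (pcomp E i) \<inter> pverts A \<noteq> {}"
  shows "is_int_interval (A \<union> E)"
  unfolding is_int_interval_def
proof (intro ballI subsetI, rule ccontr)
  fix x y t
  assume xy: "x \<in> A \<union> E" "y \<in> A \<union> E" and t: "t \<in> {x..y}" and gap: "t \<notin> A \<union> E"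
  have "x < t" "t < y" using xy t gap by (metis atLeastAtMost_iff order.not_eq_order_implies_strict)+
  consider "A \<subseteq> {..<t}" | "A \<subseteq> {t<..}" using is_int_interval_split assms(1) gap by blast
  then show False
  proof cases
    case 1
    then have "y \<in> E" using xy(2) \<open>t < y\<close> by auto
    have "e + 1 < z" if "z \<in> pcomp E y" "e \<in> A" for z e
      using 1 that pcomp_gap(1)[OF _ that(1) \<open>t < y\<close>] gap by fastforce
    then have "pverts (pcomp E y) \<inter> pverts A = {}" by (rule pverts_disjointI)
    with touch \<open>y \<in> E\<close> show False by blast
  next
    case 2
    then have "x \<in> E" using xy(1) \<open>x < t\<close> by auto
    have "z + 1 < e" if "e \<in> A" "z \<in> pcomp E x" for z e
      using 2 that pcomp_gap(2)[OF _ that(2) \<open>x < t\<close>] gap by fastforce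
    then have "pverts A \<inter> pverts (pcomp E x) = {}" by (rule pverts_disjointI)
    with touch \<open>x \<in> E\<close> show False by blast
  qed
qed

section \<open>Reflection\<close>

text \<open>Mirror image of a subgraph of Path_Z under the vertex map x \<mapsto> -x, which sends the
  edge {i - 1, i} to the edge {-i, 1 - i}.\<close>
definition reflect :: "int set \<Rightarrow> int set" where
  "reflect E = (\<lambda>e. 1 - e) ` E"

lemma mem_reflect_iff [simp]: "x \<in> reflect E \<longleftrightarrow> 1 - x \<in> E"
  unfolding reflect_def image_iff by force

lemma inj_reflect_map: "inj (\<lambda>e::int. 1 - e)"
  by (rule injI) simp

lemma finite_reflect_iff [simp]: "finite (reflect E) \<longleftrightarrow> finite E"
  unfolding reflect_def using finite_image_iff[OF inj_on_subset[OF inj_reflect_map subset_UNIV]] .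

lemma card_reflect [simp]: "card (reflect E) = card E"
  unfolding reflect_def using card_image[OF inj_on_subset[OF inj_reflect_map subset_UNIV]] .

lemma pcomp_reflect: "pcomp (reflect E) (1 - i) = reflect (pcomp E i)"
proof (intro set_eqI iffI)
  fix j
  assume "j \<in> pcomp (reflect E) (1 - i)"
  then have H: "\<forall>t. min (1 - i) j \<le> t \<and> t \<le> max (1 - i) j \<longrightarrow> 1 - t \<in> E"
    unfolding pcomp_def by simp
  have "s \<in> E" if "min i (1 - j) \<le> s" "s \<le> max i (1 - j)" for s
  proof -
    have "min (1 - i) j \<le> 1 - s \<and> 1 - s \<le> max (1 - i) j"
      using that by (simp add: min_def max_def split: if_splits)
    then show ?thesis using H by force
  qed
  then show "j \<in> reflect (pcomp E i)" unfolding pcomp_def by simp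
next
  fix j
  assume "j \<in> reflect (pcomp E i)"
  then have H: "\<forall>s. min i (1 - j) \<le> s \<and> s \<le> max i (1 - j) \<longrightarrow> s \<in> E"
    unfolding pcomp_def by simp
  have "1 - t \<in> E" if "min (1 - i) j \<le> t" "t \<le> max (1 - i) j" for t
    using that H by (simp add: min_def max_def split: if_splits)
  then show "j \<in> pcomp (reflect E) (1 - i)" unfolding pcomp_def by simp
qed

lemma pcomponents_reflect: "pcomponents (reflect E) = reflect ` pcomponents E"
proof -
  have "pcomponents (reflect E) = (\<lambda>i. pcomp (reflect E) (1 - i)) ` E"
    unfolding pcomponents_def reflect_def by (simp add: image_image)
  then show ?thesis unfolding pcomponents_def pcomp_reflect by (simp add: image_image)
qed

lemma pverts_reflect_iff: "v \<in> pverts (reflect C) \<longleftrightarrow> - v \<in> pverts C"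
  unfolding pverts_def by auto

lemma pverts_reflect_disjoint_iff:
  "pverts (reflect C) \<inter> pverts (reflect F) = {} \<longleftrightarrow> pverts C \<inter> pverts F = {}"
  using pverts_reflect_iff by (metis disjoint_iff equation_minus_iff)

lemma pminus_reflect: "pminus (reflect E) (reflect F) = reflect (pminus E F)"
proof -
  have "{C \<in> pcomponents (reflect E). pverts C \<inter> pverts (reflect F) = {}}
      = reflect ` {C \<in> pcomponents E. pverts C \<inter> pverts F = {}}"
    unfolding pcomponents_reflect using pverts_reflect_disjoint_iff by auto
  then show ?thesis unfolding pminus_def reflect_def by auto
qed

lemma pLambda_reflect [simp]: "pLambda (reflect E) = pLambda E"
  unfolding pLambda_def pcomponents_reflect image_image by simp

lemma is_int_interval_reflect:
  assumes "is_int_interval S"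
  shows "is_int_interval (reflect S)"
  unfolding is_int_interval_def
proof (intro ballI subsetI)
  fix x y t assume "x \<in> reflect S" "y \<in> reflect S" "t \<in> {x..y}"
  then have "1 - t \<in> {1 - y..1 - x}" "1 - y \<in> S" "1 - x \<in> S" by auto
  then have "1 - t \<in> S" using assms unfolding is_int_interval_def by blast
  then show "t \<in> reflect S" by simp
qed

lemma Max_reflect:
  assumes "finite S" "S \<noteq> {}"
  shows "Max (reflect S) = 1 - Min S"
proof (rule Max_eqI)
  show "y \<le> 1 - Min S" if "y \<in> reflect S" for y
    using Min_le[OF assms(1), of "1 - y"] that by simp
qed (use assms in auto)

section \<open>Chains through prefix unions\<close>

definition prefix_union :: "(nat \<Rightarrow> int set) \<Rightarrow> nat \<Rightarrow> int set" where
  "prefix_union G a = (\<Union>j\<in>{1..a}. G j)"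

definition prefix_weight :: "(nat \<Rightarrow> int set) \<Rightarrow> nat \<Rightarrow> nat \<Rightarrow> nat" where
  "prefix_weight G a b = pLambda (pminus (G b) (prefix_union G a))"

lemma prefix_union_0 [simp]: "prefix_union G 0 = {}"
  unfolding prefix_union_def by simp

lemma prefix_union_Suc: "prefix_union G (Suc a) = prefix_union G a \<union> G (Suc a)"
  unfolding prefix_union_def by (auto simp: atLeastAtMostSuc_conv)

lemma prefix_union_mono: "a \<le> b \<Longrightarrow> prefix_union G a \<subseteq> prefix_union G b"
  unfolding prefix_union_def by (rule UN_mono) auto

lemma finite_prefix_union:
  "(\<And>j. j \<in> {1..m} \<Longrightarrow> finite (G j)) \<Longrightarrow> a \<le> m \<Longrightarrow> finite (prefix_union G a)"
  unfolding prefix_union_def by auto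

lemma prefix_union_cong:
  "(\<And>j. j \<in> {1..a} \<Longrightarrow> G j = G' j) \<Longrightarrow> prefix_union G a = prefix_union G' a"
  unfolding prefix_union_def by simp

lemma prefix_union_permutes:
  "s permutes {1..a} \<Longrightarrow> prefix_union (G \<circ> s) a = prefix_union G a"
  unfolding prefix_union_def by (metis image_comp permutes_image)

lemma prefix_union_reflect: "prefix_union (\<lambda>j. reflect (G j)) a = reflect (prefix_union G a)"
  unfolding prefix_union_def reflect_def by (simp add: image_UN)

lemma prefix_weight_reflect: "prefix_weight (\<lambda>j. reflect (G j)) = prefix_weight G"
  unfolding prefix_weight_def prefix_union_reflect pminus_reflect by simp

lemma Hseq_Suc: "Hseq G (Suc a) = pminus (G (Suc a)) (prefix_union G a)"
  unfolding Hseq_def prefix_union_def by (simp add: atLeastLessThanSuc_atLeastAtMost)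

inductive chain_value :: "(nat \<Rightarrow> nat \<Rightarrow> nat) \<Rightarrow> nat \<Rightarrow> nat \<Rightarrow> bool" for w where
  chain_start: "chain_value w 0 0"
| chain_step: "chain_value w a v \<Longrightarrow> a < b \<Longrightarrow> chain_value w b (v + w a b)"
| chain_le: "chain_value w a v \<Longrightarrow> v' \<le> v \<Longrightarrow> chain_value w a v'"

lemma chain_value_extend:
  assumes "chain_value w a v" "a \<le> b"
  shows "chain_value w b v"
proof (cases "a = b")
  case False
  then have "chain_value w b (v + w a b)" using assms by (intro chain_step) auto
  then show ?thesis by (rule chain_le) simp
qed (use assms in simp)

lemma chain_value_max:
  assumes "chain_value w a u" "chain_value w b v" "a \<le> c" "b \<le> c"
  shows "chain_value w c (max u v)"
proof (cases "u \<le> v")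
  case True
  then show ?thesis using chain_value_extend[OF assms(2,4)] by (simp add: max_def)
next
  case False
  then show ?thesis using chain_value_extend[OF assms(1,3)] by (simp add: max_def)
qed

lemma Hseq_sigmaI_insert_below:
  assumes "I \<subseteq> {1..a}" "0 < a \<longrightarrow> a \<in> I" "a < b" "l \<in> {1..a}"
  shows "Hseq (G \<circ> sigmaI b (insert b I)) l = Hseq (G \<circ> sigmaI a I) l"
proof -
  have "sigmaI b (insert b I) j = sigmaI a I j" if "j \<in> {1..l}" for j
    using sigmaI_insert_below[OF assms(1) _ assms(3)] assms(2,4) that by auto
  then show ?thesis unfolding Hseq_def using assms(4) by (intro arg_cong2[where f = pminus] SUP_cong) auto
qed

lemma Hseq_sigmaI_insert_Suc:
  assumes "I \<subseteq> {1..a}" "0 < a \<longrightarrow> a \<in> I" "a < b"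
  shows "Hseq (G \<circ> sigmaI b (insert b I)) (Suc a) = pminus (G b) (prefix_union G a)"
proof -
  have "prefix_union (G \<circ> sigmaI b (insert b I)) a = prefix_union (G \<circ> sigmaI a I) a"
    using sigmaI_insert_below[OF assms(1) _ assms(3)] assms(2) by (intro prefix_union_cong) auto
  also have "\<dots> = prefix_union G a" using sigmaI_permutes[OF assms(1,2)] by (rule prefix_union_permutes)
  finally show ?thesis unfolding Hseq_Suc using sigmaI_insert_Suc[OF assms] by simp
qed

lemma chain_value_sigmaI:
  assumes "chain_value (prefix_weight G) t v"
  shows "\<exists>I. I \<subseteq> {1..t} \<and> (0 < t \<longrightarrow> t \<in> I) \<and> v \<le> vecLambda t (G \<circ> sigmaI t I)"
  using assms
proof induction
  case chain_start
  show ?case by (intro exI[of _ "{}"]) simp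
next
  case (chain_step a v b)
  then obtain I where I: "I \<subseteq> {1..a}" "0 < a \<longrightarrow> a \<in> I"
    and v: "v \<le> vecLambda a (G \<circ> sigmaI a I)" by blast
  let ?h = "\<lambda>l. pLambda (Hseq (G \<circ> sigmaI b (insert b I)) l)"
  have "v + prefix_weight G a b \<le> (\<Sum>l = 1..a. ?h l) + ?h (Suc a)"
    using v Hseq_sigmaI_insert_below[OF I chain_step.hyps(2)] Hseq_sigmaI_insert_Suc[OF I chain_step.hyps(2)]
    unfolding vecLambda_def prefix_weight_def by simp
  also have "\<dots> = (\<Sum>l = 1..Suc a. ?h l)" by simp
  also have "\<dots> \<le> (\<Sum>l = 1..b. ?h l)" using chain_step.hyps(2) by (intro sum_mono2) auto
  finally show ?case using I chain_step.hyps(2) unfolding vecLambda_def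
    by (intro exI[of _ "insert b I"]) auto
next
  case (chain_le a v v')
  then show ?case using le_trans by blast
qed

section \<open>Greedy chains along growing intervals\<close>

locale interval_growth =
  fixes G :: "nat \<Rightarrow> int set" and m l0 :: nat
  assumes finite_G: "\<And>j. j \<in> {1..m} \<Longrightarrow> finite (G j)"
    and l0: "1 \<le> l0" "l0 \<le> m" "prefix_union G l0 \<noteq> {}"
    and interval: "\<And>a. l0 \<le> a \<Longrightarrow> a \<le> m \<Longrightarrow> is_int_interval (prefix_union G a)"
begin

definition right_end :: "nat \<Rightarrow> int" where
  "right_end a = Max (prefix_union G a)"

lemma right_end_in:
  assumes "l0 \<le> a" "a \<le> m"
  shows "right_end a \<in> prefix_union G a"
proof -
  have "prefix_union G a \<noteq> {}" using prefix_union_mono[OF assms(1)] l0(3) by blast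
  then show ?thesis unfolding right_end_def using finite_prefix_union[OF finite_G assms(2)] by simp
qed

lemma right_end_ge: "a \<le> m \<Longrightarrow> e \<in> prefix_union G a \<Longrightarrow> e \<le> right_end a"
  unfolding right_end_def using finite_prefix_union[OF finite_G] by (rule Max_ge)

lemma right_end_mono: "l0 \<le> a \<Longrightarrow> a \<le> b \<Longrightarrow> b \<le> m \<Longrightarrow> right_end a \<le> right_end b"
  using right_end_in[of a] right_end_ge[of b] prefix_union_mono[of a b G] by auto

definition covers :: "int \<Rightarrow> nat \<Rightarrow> bool" where
  "covers e l \<longleftrightarrow> l0 \<le> l \<and> l \<le> m \<and> e \<le> right_end l \<and> {e..right_end l} \<subseteq> G l"

text \<open>The first prefix union reaching e gains e together with everything up to its new
  right end from its last member, because it is an interval containing right_end l0 < e.\<close>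
lemma covers_exists:
  assumes "right_end l0 < e" "e \<le> right_end m"
  shows "\<exists>l. covers e l"
proof -
  define l where "l = (LEAST l. l0 \<le> l \<and> e \<le> right_end l)"
  have l: "l0 \<le> l" "e \<le> right_end l" unfolding l_def by (rule LeastI2[of _ m]; use assms l0 in simp)+
  have "l \<le> m" unfolding l_def by (rule Least_le) (use assms l0 in simp)
  have "l \<noteq> l0" using l assms by auto
  then obtain l' where l': "l = Suc l'" "l0 \<le> l'" using l by (cases l) auto
  have "\<not> e \<le> right_end l'"
    using not_less_Least[of l' "\<lambda>l. l0 \<le> l \<and> e \<le> right_end l"] l' unfolding l_def by auto
  have "t \<in> G l" if t: "t \<in> {e..right_end l}" for t
  proof -
    have "right_end l0 \<in> prefix_union G l"
      using right_end_in[of l0] prefix_union_mono[of l0 l G] l l0 \<open>l \<le> m\<close> by auto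
    then have "t \<in> prefix_union G l"
      using interval[OF l(1) \<open>l \<le> m\<close>] right_end_in[OF l(1) \<open>l \<le> m\<close>] t assms(1)
      unfolding is_int_interval_def by (meson atLeastAtMost_iff order.strict_implies_order order.trans subsetD)
    moreover have "t \<notin> prefix_union G l'"
      using right_end_ge[of l' t] \<open>\<not> e \<le> right_end l'\<close> t \<open>l \<le> m\<close> l' by auto
    ultimately show ?thesis using prefix_union_Suc[of G l'] l' by auto
  qed
  then show ?thesis using l \<open>l \<le> m\<close> unfolding covers_def by blast
qed

lemma last_cover:
  assumes "l0 \<le> q" "q \<le> m" "right_end q < right_end m"
  obtains r where "covers (right_end q + 1) r" "\<forall>l. covers (right_end q + 1) l \<longrightarrow> l \<le> r" "q < r"
proof -
  let ?e = "right_end q + 1"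
  have "\<exists>l. covers ?e l"
    by (rule covers_exists) (use right_end_mono[OF order.refl assms(1,2)] assms(3) in linarith)+
  then obtain l where l: "covers ?e l" ..
  have bound: "y \<le> m" if "covers ?e y" for y using that unfolding covers_def by blast
  define r where "r = (GREATEST l. covers ?e l)"
  have r: "covers ?e r" "\<forall>l. covers ?e l \<longrightarrow> l \<le> r"
    unfolding r_def
    using GreatestI_nat[where P = "covers ?e", OF l bound] Greatest_le_nat[where P = "covers ?e", OF _ bound]
    by auto
  have "q < r"
  proof (rule ccontr)
    assume "\<not> q < r"
    then have "right_end r \<le> right_end q" using r(1) assms(2) right_end_mono unfolding covers_def by simp
    then show False using r(1) unfolding covers_def by simp
  qed
  with r that show ?thesis by blast
qed

lemma cover_weight_ge:
  assumes "covers e r" "pverts (pcomp (G r) (right_end r)) \<inter> pverts (prefix_union G p) = {}"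
  shows "right_end r - e + 1 \<le> int (prefix_weight G p r)"
  unfolding prefix_weight_def
  using assms l0(1) finite_G[of r] pLambda_pminus_ge_interval unfolding covers_def by auto

text \<open>A cover r of a point beyond right_end p whose component at right_end r reached down to
  a vertex of the p-th prefix union would also cover right_end p + 1.\<close>
lemma cover_component_disjoint:
  assumes "p \<le> m" "covers e r" "right_end p < right_end r" "\<not> covers (right_end p + 1) r"
  shows "pverts (pcomp (G r) (right_end r)) \<inter> pverts (prefix_union G p) = {}"
proof (rule pverts_disjointI, rule ccontr)
  fix x e' assume x: "x \<in> pcomp (G r) (right_end r)" and e': "e' \<in> prefix_union G p"
    and "\<not> e' + 1 < x"
  then have "x \<le> right_end p + 1" using right_end_ge[OF assms(1) e'] by linarith
  have "r \<le> m" using assms(2) unfolding covers_def by simp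
  have "x \<in> G r" "1 \<le> r" using x pcomp_subset assms(2) l0(1) unfolding covers_def by auto
  then have "x \<in> prefix_union G r" unfolding prefix_union_def by auto
  then have "{x..right_end r} \<subseteq> G r"
    using pcomp_atLeastAtMost[OF x] right_end_ge[OF \<open>r \<le> m\<close>] by blast
  then have "covers (right_end p + 1) r"
    using \<open>x \<le> right_end p + 1\<close> assms(2,3) unfolding covers_def by auto
  with assms(4) show False ..
qed

text \<open>Invariant of the greedy construction: q is the last cover of right_end p + 1, and chains
  ending at p and at q together gain the growth of the right end so far.  The next greedy index
  r is appended to the chain ending at p, skipping q; this keeps the component counted at r away
  from the p-th prefix union.\<close>
lemma greedy_chain_from:
  assumes "l0 \<le> p" "p \<le> q" "q \<le> m"
    and "chain_value (prefix_weight G) p vp" "chain_value (prefix_weight G) q vq"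
    and "right_end q - right_end l0 \<le> int vp + int vq"
    and "\<forall>l. covers (right_end p + 1) l \<longrightarrow> l \<le> q"
  shows "\<exists>v. chain_value (prefix_weight G) m v \<and> right_end m - right_end l0 \<le> 2 * int v"
  using assms
proof (induction "nat (right_end m - right_end q)" arbitrary: p q vp vq rule: less_induct)
  case less
  show ?case
  proof (cases "right_end q < right_end m")
    case False
    have "chain_value (prefix_weight G) m (max vp vq)"
      using less.prems(2,3) by (intro chain_value_max[OF less.prems(4,5)]) auto
    moreover have "int vp \<le> int (max vp vq)" "int vq \<le> int (max vp vq)" by simp_all
    with False less.prems(6) have "right_end m - right_end l0 \<le> 2 * int (max vp vq)" by linarith
    ultimately show ?thesis by blast
  next
    case True
    have "l0 \<le> q" using less.prems(1,2) by simp
    then obtain r where r: "covers (right_end q + 1) r" "q < r"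
      "\<forall>l. covers (right_end q + 1) l \<longrightarrow> l \<le> r"
      using last_cover less.prems(3) True by blast
    have "r \<le> m" "right_end q < right_end r" using r(1) unfolding covers_def by auto
    have "right_end p \<le> right_end q" using right_end_mono less.prems(1-3) by blast
    have "\<not> covers (right_end p + 1) r" using less.prems(7) r(2) by auto
    then have "pverts (pcomp (G r) (right_end r)) \<inter> pverts (prefix_union G p) = {}"
      using less.prems(2,3) r(1) \<open>right_end p \<le> right_end q\<close> \<open>right_end q < right_end r\<close>
      by (intro cover_component_disjoint) auto
    then have "right_end r - right_end q \<le> int (prefix_weight G p r)"
      using cover_weight_ge[OF r(1)] by simp
    then have gain: "right_end r - right_end l0 \<le> int vq + int (vp + prefix_weight G p r)"
      using less.prems(6) by simp
    have chain_r: "chain_value (prefix_weight G) r (vp + prefix_weight G p r)"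
      using less.prems(4) by (rule chain_step) (use less.prems(2) r(2) in simp)
    have "nat (right_end m - right_end r) < nat (right_end m - right_end q)"
      using True \<open>right_end q < right_end r\<close> by simp
    from less.hyps[OF this \<open>l0 \<le> q\<close> less_imp_le[OF r(2)] \<open>r \<le> m\<close> less.prems(5)
        chain_r gain r(3)]
    show ?thesis .
  qed
qed

lemma greedy_chain:
  "\<exists>v. chain_value (prefix_weight G) m v \<and> right_end m - right_end l0 \<le> 2 * int v"
proof (cases "right_end l0 < right_end m")
  case False
  have "chain_value (prefix_weight G) m 0" using chain_start chain_value_extend by blast
  then show ?thesis using False by auto
next
  case True
  obtain q where q: "covers (right_end l0 + 1) q"
    "\<forall>l. covers (right_end l0 + 1) l \<longrightarrow> l \<le> q" "l0 < q"
    using last_cover l0 True by blast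
  have "pverts {} = {}" by (simp add: pverts_def)
  then have "right_end q - right_end l0 \<le> int (prefix_weight G 0 q)"
    using cover_weight_ge[OF q(1), of 0] by simp
  moreover have "chain_value (prefix_weight G) q (0 + prefix_weight G 0 q)"
    by (rule chain_step[OF chain_start]) (use q(3) in simp)
  moreover have "chain_value (prefix_weight G) l0 0" using chain_start chain_value_extend by blast
  moreover have "q \<le> m" using q(1) unfolding covers_def by simp
  ultimately show ?thesis using greedy_chain_from[of l0 q 0] q(2,3) l0 by simp
qed

end

section \<open>Families with vecDelta = 1\<close>

lemma first_nonempty:
  fixes G :: "nat \<Rightarrow> 'a set"
  assumes "j \<in> {1..m}" "G j \<noteq> {}"
  obtains l0 where "l0 \<in> {1..m}" "G l0 \<noteq> {}" "\<And>i. i \<in> {1..<l0} \<Longrightarrow> G i = {}"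
proof -
  let ?P = "\<lambda>l. l \<in> {1..m} \<and> G l \<noteq> {}"
  have "?P (Least ?P)" using LeastI[of ?P j] assms by blast
  moreover have "G i = {}" if "i \<in> {1..<Least ?P}" for i
    using not_less_Least[of i ?P] that \<open>?P (Least ?P)\<close> by auto
  ultimately show ?thesis using that by blast
qed

lemma Hseq_first_nonempty:
  "(\<And>i. i \<in> {1..<l} \<Longrightarrow> G i = {}) \<Longrightarrow> Hseq G l = G l"
  unfolding Hseq_def by simp

lemma prefix_union_first_nonempty:
  assumes "1 \<le> l" "\<And>i. i \<in> {1..<l} \<Longrightarrow> G i = {}"
  shows "prefix_union G l = G l"
proof -
  obtain a where a: "l = Suc a" using assms(1) by (cases l) auto
  then have "prefix_union G a = {}" unfolding prefix_union_def using assms(2) by auto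
  then show ?thesis unfolding a by (simp add: prefix_union_Suc)
qed

lemma vecDelta_pos:
  assumes "\<And>j. j \<in> {1..m} \<Longrightarrow> finite (G j)" "j \<in> {1..m}" "G j \<noteq> {}"
  shows "1 \<le> vecDelta m G"
proof (rule first_nonempty[where G = G, OF assms(2,3)])
  fix l0 assume l0: "l0 \<in> {1..m}" "G l0 \<noteq> {}" "\<And>i. i \<in> {1..<l0} \<Longrightarrow> G i = {}"
  have "Hseq G l0 = G l0" using l0(3) by (rule Hseq_first_nonempty)
  moreover have "1 \<le> pDelta (G l0)" using assms(1)[OF l0(1)] l0(2) by (rule pDelta_ge_1)
  ultimately have "1 \<le> pDelta (Hseq G l0)" by simp
  also have "\<dots> \<le> vecDelta m G"
    unfolding vecDelta_def using l0(1) by (intro member_le_sum) auto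
  finally show ?thesis .
qed

lemma vecDelta_permutes_pos:
  assumes "s permutes {1..m}" "\<And>j. j \<in> {1..m} \<Longrightarrow> finite (G j)" "j \<in> {1..m}" "G j \<noteq> {}"
  shows "1 \<le> vecDelta m (G \<circ> s)"
proof -
  obtain i where "i \<in> {1..m}" "s i = j"
    using permutes_image[OF assms(1)] assms(3) by (metis imageE)
  then show ?thesis
    using assms permutes_in_image[OF assms(1)] by (intro vecDelta_pos[of m "G \<circ> s" i]) auto
qed

lemma vecDelta_eq_1_Hseq:
  assumes fin: "\<And>j. j \<in> {1..m} \<Longrightarrow> finite (G j)" and "vecDelta m G = 1"
    and l0: "l0 \<in> {1..m}" "G l0 \<noteq> {}" "\<And>i. i \<in> {1..<l0} \<Longrightarrow> G i = {}"
  shows "pDelta (G l0) = 1" and "\<forall>l \<in> {1..m} - {l0}. Hseq G l = {}"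
proof -
  let ?f = "\<lambda>l. pDelta (Hseq G l)"
  have H_l0: "Hseq G l0 = G l0" using l0(3) by (rule Hseq_first_nonempty)
  have "1 \<le> pDelta (G l0)" using fin[OF l0(1)] l0(2) by (rule pDelta_ge_1)
  then have "?f l0 \<ge> 1" using H_l0 by simp
  moreover have "?f l0 + (\<Sum>l \<in> {1..m} - {l0}. ?f l) = 1"
    using assms(2) l0(1) unfolding vecDelta_def by (simp add: sum.remove)
  ultimately have "?f l0 = 1" and rest: "(\<Sum>l \<in> {1..m} - {l0}. ?f l) = 0" by linarith+
  then show "pDelta (G l0) = 1" using H_l0 by simp
  have "finite (Hseq G l)" if "l \<in> {1..m}" for l
    unfolding Hseq_def using finite_subset[OF pminus_subset fin[OF that]] .
  then show "\<forall>l \<in> {1..m} - {l0}. Hseq G l = {}" using rest pDelta_eq_0 by simp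
qed

lemma interval_growth_if_vecDelta_eq_1:
  assumes fin: "\<And>j. j \<in> {1..m} \<Longrightarrow> finite (G j)" and "vecDelta m G = 1"
    and l0: "l0 \<in> {1..m}" "G l0 \<noteq> {}" "\<And>i. i \<in> {1..<l0} \<Longrightarrow> G i = {}"
  shows "interval_growth G m l0"
proof -
  note H = vecDelta_eq_1_Hseq[OF assms]
  have U_l0: "prefix_union G l0 = G l0"
    using l0(1,3) by (intro prefix_union_first_nonempty) auto
  have "is_int_interval (prefix_union G a)" if "l0 \<le> a" "a \<le> m" for a
    using that
  proof (induction a)
    case 0
    then show ?case using l0(1) by simp
  next
    case (Suc a)
    show ?case
    proof (cases "Suc a = l0")
      case True
      then show ?thesis using pDelta_eq_1_interval[OF H(1)] U_l0 by simp
    next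
      case False
      then have "pminus (G (Suc a)) (prefix_union G a) = {}"
        using H(2) Suc.prems by (simp flip: Hseq_Suc)
      then have "pverts (pcomp (G (Suc a)) i) \<inter> pverts (prefix_union G a) \<noteq> {}"
        if "i \<in> G (Suc a)" for i
        using pminus_eq_empty_touches that by blast
      then show ?thesis
        using is_int_interval_Un Suc False by (simp add: prefix_union_Suc)
    qed
  qed
  then show ?thesis using fin l0 U_l0 by unfold_locales auto
qed

lemma interval_growth_reflect:
  assumes "interval_growth G m l0"
  shows "interval_growth (\<lambda>j. reflect (G j)) m l0"
proof -
  interpret interval_growth G m l0 by (fact assms)
  show ?thesis
  proof
    show "finite (reflect (G j))" if "j \<in> {1..m}" for j using finite_G[OF that] by simp
    show "prefix_union (\<lambda>j. reflect (G j)) l0 \<noteq> {}"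
      using l0(3) unfolding prefix_union_reflect by (simp add: reflect_def)
    show "is_int_interval (prefix_union (\<lambda>j. reflect (G j)) a)" if "l0 \<le> a" "a \<le> m" for a
      unfolding prefix_union_reflect using interval[OF that] by (rule is_int_interval_reflect)
  qed (use l0 in auto)
qed

lemma chain_value_ge_quarter:
  assumes "k > 0" and fin: "\<And>j. j \<in> {1..m} \<Longrightarrow> finite (G j)"
    and cover: "(\<Union>j\<in>{1..m}. G j) = {1..int k}" and "vecDelta m G = 1"
  shows "\<exists>v. chain_value (prefix_weight G) m v \<and> int k - int (Max (pLambda ` G ` {1..m})) \<le> 4 * int v"
proof -
  have "1 \<in> (\<Union>j\<in>{1..m}. G j)" using cover assms(1) by simp
  then obtain j where "j \<in> {1..m}" "1 \<in> G j" by blast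
  then obtain l0 where l0: "l0 \<in> {1..m}" "G l0 \<noteq> {}" "\<And>i. i \<in> {1..<l0} \<Longrightarrow> G i = {}"
    using first_nonempty[where G = G] by blast
  interpret R: interval_growth G m l0
    using fin assms(4) l0 by (rule interval_growth_if_vecDelta_eq_1)
  interpret L: interval_growth "\<lambda>j. reflect (G j)" m l0
    using interval_growth_reflect R.interval_growth_axioms .
  obtain v1 where v1: "chain_value (prefix_weight G) m v1" "R.right_end m - R.right_end l0 \<le> 2 * int v1"
    using R.greedy_chain by blast
  obtain v2 where v2: "chain_value (prefix_weight G) m v2" "L.right_end m - L.right_end l0 \<le> 2 * int v2"
    using L.greedy_chain unfolding prefix_weight_reflect by blast
  have U_m: "prefix_union G m = {1..int k}" using cover unfolding prefix_union_def .
  have U_l0: "prefix_union G l0 = G l0"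
    using l0(1,3) by (intro prefix_union_first_nonempty) auto
  have fin_l0: "finite (G l0)" using fin l0(1) .
  have "R.right_end m = int k" unfolding R.right_end_def U_m by (rule Max_eqI) (use assms(1) in auto)
  moreover have "L.right_end m = 0"
  proof -
    have "Min {1..int k} = 1" by (rule Min_eqI) (use assms(1) in auto)
    then show ?thesis
      unfolding L.right_end_def prefix_union_reflect U_m using assms(1) by (subst Max_reflect) auto
  qed
  moreover have "R.right_end l0 = Max (G l0)" unfolding R.right_end_def U_l0 ..
  moreover have "L.right_end l0 = 1 - Min (G l0)"
    unfolding L.right_end_def prefix_union_reflect U_l0 using fin_l0 l0(2) by (rule Max_reflect)
  moreover have "Max (G l0) - Min (G l0) + 1 \<le> int (pLambda (G l0))"
    using R.interval[OF order.refl R.l0(2)] fin_l0 l0(2) unfolding U_l0 by (intro pLambda_ge_Max_Min)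
  moreover have "pLambda (G l0) \<le> Max (pLambda ` G ` {1..m})" using l0(1) by (intro Max_ge) auto
  moreover have "chain_value (prefix_weight G) m (max v1 v2)" by (rule chain_value_max[OF v1(1) v2(1)]) simp_all
  moreover have "int v1 \<le> int (max v1 v2)" "int v2 \<le> int (max v1 v2)" by simp_all
  ultimately show ?thesis using v1(2) v2(2) by (intro exI[of _ "max v1 v2"]) linarith
qed

theorem lemma5p6:
  fixes k m :: nat and G :: "nat \<Rightarrow> int set"
  assumes "k > 0"
    and "\<forall>j\<in>{1..m}. finite (G j)"
    and "(\<Union> j\<in>{1..m}. G j) = {1..int k}"
    and "vecDelta m G = 1"
  shows "\<exists>\<sigma> I. I \<subseteq> {1..m} \<and> m \<in> I \<and> \<sigma> = sigmaI m I \<and> shift_perm m \<sigma>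
           \<and> real (vecLambda m (G \<circ> \<sigma>))
               \<ge> real k / 8 - real (Max (pLambda ` G ` {1..m})) / 2
           \<and> (\<forall>j\<in>{1..m}. real (vecDelta m (G \<circ> sigmaI m (tildeI I j)))
                           \<ge> real (vecDelta m G) / 2)"
proof -
  have fin: "\<And>j. j \<in> {1..m} \<Longrightarrow> finite (G j)" using assms(2) by blast
  have "1 \<in> (\<Union>j\<in>{1..m}. G j)" using assms(1,3) by simp
  then obtain j0 where j0: "j0 \<in> {1..m}" "1 \<in> G j0" by blast
  obtain v where v: "chain_value (prefix_weight G) m v"
      "int k - int (Max (pLambda ` G ` {1..m})) \<le> 4 * int v"
    using chain_value_ge_quarter[OF assms(1) fin assms(3,4)] by blast
  obtain I where I: "I \<subseteq> {1..m}" "m \<in> I" "v \<le> vecLambda m (G \<circ> sigmaI m I)"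
    using chain_value_sigmaI[OF v(1)] j0(1) by auto
  have "real k / 8 - real (Max (pLambda ` G ` {1..m})) / 2 \<le> real (vecLambda m (G \<circ> sigmaI m I))"
    using v(2) I(3) by linarith
  moreover have "real (vecDelta m G) / 2 \<le> real (vecDelta m (G \<circ> sigmaI m (tildeI I j)))"
    if "j \<in> {1..m}" for j
  proof -
    have "sigmaI m (tildeI I j) permutes {1..m}"
      using tildeI_subset[OF I(1,2) that] by (intro sigmaI_permutes) auto
    moreover have "G j0 \<noteq> {}" using j0(2) by blast
    ultimately have "1 \<le> vecDelta m (G \<circ> sigmaI m (tildeI I j))"
      using vecDelta_permutes_pos[of "sigmaI m (tildeI I j)" m G j0] fin j0(1) by blast
    then show ?thesis using assms(4) by simp
  qed
  ultimately show ?thesis using I(1,2) shift_perm_sigmaI by blast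
qed

end
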